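(* Let $X$ and $Y$ be real-valued random variables and consider the two Bayesian causal models $M_{X\rightarrow Y}$ and $M_{Y\rightarrow X}$ defined as follows. In $M_{X\rightarrow Y}$, the marginal density of the cause is $p(x\mid M_{X\rightarrow Y})=\mathcal{N}(x\mid 0,1)$ and the conditional density of the effect is $p(y\mid x,\boldsymbol{\theta}_Y,M_{X\rightarrow Y})=\mathcal{N}\big(y\mid \mu(x;\boldsymbol{\theta}_Y),\sigma^2(x;\boldsymbol{\theta}_Y)\big)$, where $\mu(\cdot;\boldsymbol{\theta}_Y)=f_{Y,1}(\cdot;\boldsymbol{\theta}_Y)$ and $\sigma(\cdot;\boldsymbol{\theta}_Y)=\zeta\big(f_{Y,2}(\cdot;\boldsymbol{\theta}_Y)\big)$ for a neural network $\mathbf{f}_Y=(f_{Y,1},f_{Y,2}):\mathbb{R}\to\mathbb{R}^2$ with one hidden layer and parameters $\boldsymbol{\theta}_Y$, and $\zeta$ is a positive link function (e.g. $\exp$ or softplus). The parameters $\boldsymbol{\theta}_Y$ have independent zero-mean Gaussian priors: each weight $w_{ij}\sim\mathcal{N}(0,z_{ij}^2)$ and each bias $b_j\sim\mathcal{N}(0,\sigma_b^2)$. The model $M_{Y\rightarrow X}$ is defined symmetrically with the roles of $X$ and $Y$ exchanged (marginal $\mathcal{N}(y\mid0,1)$, conditional $\mathcal{N}(x\mid \mu(y;\boldsymbol{\theta}_X),\sigma^2(y;\boldsymbol{\theta}_X))$ given by an analogous one-hidden-layer network with the same type of Gaussian priors). Then $M_{X\rightarrow Y}$ and $M_{Y\rightarrow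 X}$ are not separable-compatible.
   Context: A Bayesian causal model $M_{X\rightarrow Y}$ consists of a class $\mathcal{C}_X$ of marginal distributions $m_X$ of $X$, a class $\mathcal{C}_{Y\mid X}$ of conditional distributions $c_{Y\mid X}$ of $Y$ given $X$, and a factorized prior $\pi_{X\rightarrow Y}(m_X,c_{Y\mid X})=\pi_X(m_X)\pi_{Y\mid X}(c_{Y\mid X})$; similarly $M_{Y\rightarrow X}$ has $\mathcal{C}_Y$, $\mathcal{C}_{X\mid Y}$ and prior $\pi_{Y\rightarrow X}(m_Y,c_{X\mid Y})=\pi_Y(m_Y)\pi_{X\mid Y}(c_{X\mid Y})$. Let $\gamma:\mathcal{C}_X\times\mathcal{C}_{Y\mid X}\to\mathcal{C}_Y\times\mathcal{C}_{X\mid Y}$ be the bijection mapping $(m_X,c_{Y\mid X})$ to the unique $(m_Y,c_{X\mid Y})$ with $m_X(x)c_{Y\mid X}(y\mid x)=m_Y(y)c_{X\mid Y}(x\mid y)$ for all $x,y$ (i.e. the anti-causal factorization of the same joint). The two models are called separable-compatible if such a bijection $\gamma$ exists, the push-forward $\gamma_\sharp\pi_{X\rightarrow Y}$ is separable with respect to $\mathcal{C}_Y\times\mathcal{C}_{X\mid Y}$ and equals $\pi_Y(m_Y)\pi_{X\mid Y}(c_{X\mid Y})$, and the push-forward $\gamma^{-1}_\sharp\pi_{Y\rightarrow X}$ is separable with respect to $\mathcal{C}_X\times\mathcal{C}_{Y\mid X}$ (equivalently: the anti-causal factorization of each model lies in the same distribution classes as the other model, with a prior that factorizes into independent priors matching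 the other model's priors). *)

theory Defs
  imports "HOL-Probability.Probability"
begin

text \<open>A conditional density
  c(b | a) is represented as a function c :: real => real => real with c a b = c(b | a).\<close>

definition fun_alg :: "(real \<Rightarrow> real) measure" where
  "fun_alg = Pi\<^sub>M UNIV (\<lambda>_::real. borel)"

definition cond_alg :: "(real \<Rightarrow> real \<Rightarrow> real) measure" where
  "cond_alg = Pi\<^sub>M UNIV (\<lambda>_::real. fun_alg)"

text \<open>A Bayesian causal model for cause A and effect B: the prior on the class of marginals
  of the cause (its space is the class C_A) and the prior on the class of conditionals
  of the effect given the cause (its space is the class C_{B|A}).\<close>

record bcm =
  bcm_marg :: "(real \<Rightarrow> real) measure"
  bcm_cond :: "(real \<Rightarrow> real \<Rightarrow> real) measure"

definition bcm_prior :: "bcm \<Rightarrow> ((real \<Rightarrow> real) \<times> (real \<Rightarrow> real \<Rightarrow> real)) measure" where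
  "bcm_prior M = bcm_marg M \<Otimes>\<^sub>M bcm_cond M"

text \<open>M is a model X -> Y, N a model Y -> X.  gamma maps (m_X, c_{Y|X}) to the anti-causal
  factorization (m_Y, c_{X|Y}) of the same joint; the push-forward of the prior of M is
  the (factorized) prior of N and the push-forward of the prior of N under the inverse
  is the (factorized) prior of M.\<close>

definition separable_compatible :: "bcm \<Rightarrow> bcm \<Rightarrow> bool" where
  "separable_compatible M N \<longleftrightarrow>
     (\<exists>\<gamma>. bij_betw \<gamma> (space (bcm_prior M)) (space (bcm_prior N)) \<and>
        (\<forall>p \<in> space (bcm_prior M). \<forall>x y.
            fst p x * snd p x y = fst (\<gamma> p) y * snd (\<gamma> p) y x) \<and>
        \<gamma> \<in> measurable (bcm_prior M) (bcm_prior N) \<and>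
        distr (bcm_prior M) (bcm_prior N) \<gamma> = bcm_prior N \<and>
        the_inv_into (space (bcm_prior M)) \<gamma> \<in> measurable (bcm_prior N) (bcm_prior M) \<and>
        distr (bcm_prior N) (bcm_prior M) (the_inv_into (space (bcm_prior M)) \<gamma>) = bcm_prior M)"

text \<open>Parameters of a one-hidden-layer network R -> R^2 with H hidden units:
  input weights W_in i, hidden biases B_hid i, output weights W_out k i and output
  biases B_out k, where k = True is the mean output f_1 and k = False the scale output f_2.\<close>

datatype nn_idx = W_in nat | B_hid nat | W_out bool nat | B_out bool

definition nn_idx_set :: "nat \<Rightarrow> nn_idx set" where
  "nn_idx_set H = {W_in i | i. i < H} \<union> {B_hid i | i. i < H} \<union>
                  {W_out k i | k i. i < H} \<union> {B_out k | k. True}"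

definition is_weight :: "nn_idx \<Rightarrow> bool" where
  "is_weight j \<longleftrightarrow> (case j of W_in _ \<Rightarrow> True | W_out _ _ \<Rightarrow> True | _ \<Rightarrow> False)"

definition nn_out :: "nat \<Rightarrow> (real \<Rightarrow> real) \<Rightarrow> (nn_idx \<Rightarrow> real) \<Rightarrow> bool \<Rightarrow> real \<Rightarrow> real" where
  "nn_out H \<phi> \<theta> k t =
     (\<Sum>i<H. \<theta> (W_out k i) * \<phi> (\<theta> (W_in i) * t + \<theta> (B_hid i))) + \<theta> (B_out k)"

text \<open>Conditional density N(b | mu(a; theta), sigma(a; theta)^2), with mu = f_1 and
  sigma = zeta o f_2 (normal_density m s is the Gaussian density with mean m, std. dev. s).\<close>
definition nn_cond :: "nat \<Rightarrow> (real \<Rightarrow> real) \<Rightarrow> (real \<Rightarrow> real) \<Rightarrow> (nn_idx \<Rightarrow> real)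
                        \<Rightarrow> real \<Rightarrow> real \<Rightarrow> real" where
  "nn_cond H \<phi> \<zeta> \<theta> a b = normal_density (nn_out H \<phi> \<theta> True a) (\<zeta> (nn_out H \<phi> \<theta> False a)) b"

definition nn_param_prior :: "nat \<Rightarrow> (nn_idx \<Rightarrow> real) \<Rightarrow> real \<Rightarrow> (nn_idx \<Rightarrow> real) measure" where
  "nn_param_prior H z sb =
     (\<Pi>\<^sub>M j \<in> nn_idx_set H. density lborel (normal_density 0 (if is_weight j then z j else sb)))"

definition nn_cond_class :: "nat \<Rightarrow> (real \<Rightarrow> real) \<Rightarrow> (real \<Rightarrow> real) \<Rightarrow> (real \<Rightarrow> real \<Rightarrow> real) set" where
  "nn_cond_class H \<phi> \<zeta> = (\<lambda>\<theta>. nn_cond H \<phi> \<zeta> \<theta>) ` (PiE (nn_idx_set H) (\<lambda>_. UNIV))"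

definition nn_cond_prior :: "nat \<Rightarrow> (real \<Rightarrow> real) \<Rightarrow> (real \<Rightarrow> real) \<Rightarrow> (nn_idx \<Rightarrow> real) \<Rightarrow> real
                              \<Rightarrow> (real \<Rightarrow> real \<Rightarrow> real) measure" where
  "nn_cond_prior H \<phi> \<zeta> z sb =
     distr (nn_param_prior H z sb) (restrict_space cond_alg (nn_cond_class H \<phi> \<zeta>))
           (\<lambda>\<theta>. nn_cond H \<phi> \<zeta> \<theta>)"

definition std_marg_prior :: "(real \<Rightarrow> real) measure" where
  "std_marg_prior = return (restrict_space fun_alg {normal_density 0 1}) (normal_density 0 1)"

definition nn_model :: "nat \<Rightarrow> (real \<Rightarrow> real) \<Rightarrow> (real \<Rightarrow> real) \<Rightarrow> (nn_idx \<Rightarrow> real) \<Rightarrow> real \<Rightarrow> bcm" where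
  "nn_model H \<phi> \<zeta> z sb = \<lparr> bcm_marg = std_marg_prior, bcm_cond = nn_cond_prior H \<phi> \<zeta> z sb \<rparr>"

end

theory Submission
  imports Defs
begin

text \<open>Both models put a Dirac prior on the standard normal marginal of the cause.  Integrating
  x out of the identity m_X(x) c(y | x) = m_Y(y) c'(x | y) shows that the anti-causal marginal
  m_Y is the Y-marginal of the joint, so every joint of the model X \<rightarrow> Y would need a standard
  normal Y-marginal.  But with all output weights zero the network ignores its input, giving
  the conditional N(5, \<zeta>(0)^2) and hence the Y-marginal N(5, \<zeta>(0)^2).\<close>

lemma space_bcm_prior: "space (bcm_prior M) = space (bcm_marg M) \<times> space (bcm_cond M)"
  by (simp add: bcm_prior_def space_pair_measure)

lemma marginal_eq_of_factorization:
  fixes mX mY :: "real \<Rightarrow> real" and c c' :: "real \<Rightarrow> real \<Rightarrow> real"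
  assumes "\<And>x y. mX x * c x y = mY y * c' y x" and "(\<integral>x. c' y x \<partial>lborel) = 1"
  shows "(\<integral>x. mX x * c x y \<partial>lborel) = mY y"
  by (simp add: assms)

lemma separable_compatible_effect_marginal:
  assumes "separable_compatible M N" and "(mX, c) \<in> space (bcm_prior M)"
    and "\<And>c' y. c' \<in> space (bcm_cond N) \<Longrightarrow> (\<integral>x. c' y x \<partial>lborel) = 1"
  obtains mY where "mY \<in> space (bcm_marg N)" and "\<And>y. (\<integral>x. mX x * c x y \<partial>lborel) = mY y"
proof -
  from assms(1) obtain \<gamma> where
    \<gamma>: "bij_betw \<gamma> (space (bcm_prior M)) (space (bcm_prior N))" and
    factorization: "\<forall>p \<in> space (bcm_prior M). \<forall>x y.
            fst p x * snd p x y = fst (\<gamma> p) y * snd (\<gamma> p) y x"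
    unfolding separable_compatible_def by blast
  obtain mY c' where \<gamma>_image: "\<gamma> (mX, c) = (mY, c')"
    by fastforce
  have "\<gamma> (mX, c) \<in> space (bcm_prior N)"
    using bij_betw_apply[OF \<gamma> assms(2)] .
  then have "mY \<in> space (bcm_marg N)" "c' \<in> space (bcm_cond N)"
    by (simp_all add: \<gamma>_image space_bcm_prior)
  moreover have "(\<integral>x. mX x * c x y \<partial>lborel) = mY y" for y
    using factorization assms(2,3) \<gamma>_image \<open>c' \<in> space (bcm_cond N)\<close>
    by (intro marginal_eq_of_factorization[where c' = c']) force+
  ultimately show ?thesis using that by blast
qed

lemma normal_density_eq_std_imp_mean_zero:
  fixes m s :: real
  assumes "s > 0" and "normal_density m s = normal_density 0 1"
  shows "m = 0"
proof -
  have "normal_density m s m = normal_density m s (- m)"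
    using assms(2) by (simp add: normal_density_def)
  then have "exp 0 = exp (- ((- m - m)\<^sup>2) / (2 * s\<^sup>2))"
    using assms(1) by (simp add: normal_density_def)
  then have "(- m - m)\<^sup>2 / (2 * s\<^sup>2) = 0"
    by simp
  then show ?thesis
    using assms(1) by simp
qed

lemma space_fun_alg [simp]: "space fun_alg = UNIV"
  by (simp add: fun_alg_def space_PiM)

lemma space_cond_alg [simp]: "space cond_alg = UNIV"
  by (simp add: cond_alg_def space_PiM)

lemma space_bcm_marg_nn_model [simp]:
  "space (bcm_marg (nn_model H \<phi> \<zeta> z sb)) = {normal_density 0 1}"
  by (simp add: nn_model_def std_marg_prior_def space_restrict_space)

lemma space_bcm_cond_nn_model [simp]:
  "space (bcm_cond (nn_model H \<phi> \<zeta> z sb)) = nn_cond_class H \<phi> \<zeta>"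
  by (simp add: nn_model_def nn_cond_prior_def space_restrict_space)

lemma nn_out_eq_output_bias:
  assumes "\<And>i. i < H \<Longrightarrow> \<theta> (W_out k i) = 0"
  shows "nn_out H \<phi> \<theta> k t = \<theta> (B_out k)"
  using assms by (simp add: nn_out_def)

lemma constant_normal_in_nn_cond_class:
  "(\<lambda>_. normal_density m (\<zeta> s)) \<in> nn_cond_class H \<phi> \<zeta>"
proof -
  define \<theta> where "\<theta> = restrict (\<lambda>j. if j = B_out True then m else if j = B_out False then s else 0)
    (nn_idx_set H)"
  have "\<theta> (W_out k i) = 0" if "i < H" for k i
    using that by (auto simp: \<theta>_def nn_idx_set_def)
  moreover have "\<theta> (B_out True) = m" "\<theta> (B_out False) = s"
    by (auto simp: \<theta>_def nn_idx_set_def)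
  ultimately have "nn_cond H \<phi> \<zeta> \<theta> = (\<lambda>_. normal_density m (\<zeta> s))"
    by (simp add: nn_cond_def nn_out_eq_output_bias fun_eq_iff)
  moreover have "\<theta> \<in> PiE (nn_idx_set H) (\<lambda>_. UNIV)"
    by (simp add: \<theta>_def)
  ultimately show ?thesis
    unfolding nn_cond_class_def by (metis image_eqI)
qed

lemma integral_nn_cond_class:
  assumes "\<And>t. \<zeta> t > 0" and "c \<in> nn_cond_class H \<phi> \<zeta>"
  shows "(\<integral>x. c a x \<partial>lborel) = 1"
  using assms by (auto simp: nn_cond_class_def nn_cond_def)

theorem proposition4p2:
  fixes H1 H2 :: nat and \<phi>1 \<phi>2 \<zeta>1 \<zeta>2 :: "real \<Rightarrow> real"
    and z1 z2 :: "nn_idx \<Rightarrow> real" and sb1 sb2 :: real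
  assumes "H1 > 0" and "H2 > 0"
    and "continuous_on UNIV \<phi>1" and "continuous_on UNIV \<phi>2"
    and "continuous_on UNIV \<zeta>1" and "continuous_on UNIV \<zeta>2"
    and "\<And>t. \<zeta>1 t > 0" and "\<And>t. \<zeta>2 t > 0"
    and "\<And>j. z1 j > 0" and "\<And>j. z2 j > 0"
    and "sb1 > 0" and "sb2 > 0"
  shows "\<not> separable_compatible (nn_model H1 \<phi>1 \<zeta>1 z1 sb1) (nn_model H2 \<phi>2 \<zeta>2 z2 sb2)"
proof
  assume compatible: "separable_compatible (nn_model H1 \<phi>1 \<zeta>1 z1 sb1) (nn_model H2 \<phi>2 \<zeta>2 z2 sb2)"
  have "(normal_density 0 1, \<lambda>_. normal_density 5 (\<zeta>1 0))
      \<in> space (bcm_prior (nn_model H1 \<phi>1 \<zeta>1 z1 sb1))"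
    by (simp add: space_bcm_prior constant_normal_in_nn_cond_class)
  moreover have "\<And>c' y. c' \<in> space (bcm_cond (nn_model H2 \<phi>2 \<zeta>2 z2 sb2))
      \<Longrightarrow> (\<integral>x. c' y x \<partial>lborel) = 1"
    using integral_nn_cond_class[OF assms(8)] by simp
  ultimately obtain mY where "mY \<in> space (bcm_marg (nn_model H2 \<phi>2 \<zeta>2 z2 sb2))"
    and "\<And>y. (\<integral>x. normal_density 0 1 x * normal_density 5 (\<zeta>1 0) y \<partial>lborel) = mY y"
    using separable_compatible_effect_marginal[OF compatible] by blast
  then have "normal_density 5 (\<zeta>1 0) = normal_density 0 1"
    by (simp add: fun_eq_iff)
  with normal_density_eq_std_imp_mean_zero[OF assms(7)] show False
    by fastforce
qed

end
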